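(* Let $\mathcal O$ be a non-degenerate conic of $\mathrm{PG}(2,q^2)$ and let $\mathcal Q_\infty,\mathcal Q_0$ be the quadrics of $\mathrm{PG}(4,q)$ associated with $\mathcal O$ (so $[\mathcal O]=\mathcal Q_\infty\cap\mathcal Q_0$). For every $t\in\mathbb F_q\cup\{\infty\}$, the quadric $\mathcal Q_t^\star$ of $\mathrm{PG}(4,q^2)$ with equation $tf_\infty+f_0=0$ (meaning $f_\infty=0$ when $t=\infty$) meets the transversal $g$ in exactly $0$, $1$ or $2$ points according as $\mathcal O$ meets $\ell_\infty$ in $0$, $1$ or $2$ points respectively.
   Context: Coordinates: $q$ a prime power; $\tau$ is a primitive element of $\mathbb F_{q^2}$ with minimal polynomial $x^2-t_1x-t_0$ over $\mathbb F_q$. $\mathrm{PG}(2,q^2)$ has coordinates $(x,y,z)$, $\ell_\infty: z=0$; $\mathrm{PG}(4,q)$ has coordinates $(x_0,x_1,y_0,y_1,z)$ and $\Sigma_\infty: z=0$. The Bruck–Bose map sends the affine point $(x_0+x_1\tau,y_0+y_1\tau,z)$, $x_i,y_i,z\in\mathbb F_q$, $z\ne0$, to $(x_0,x_1,y_0,y_1,z)$, and the point $(\delta,1,0)\in\ell_\infty$, $\delta=d_0+d_1\tau$, to the spread line $\langle(d_0,d_1,1,0,0),(t_0d_1,d_0+t_1d_1,0,1,0)\rangle$ (and $(1,0,0)$ to $\langle(1,0,0,0,0),(0,1,0,0,0)\rangle$); these lines form a regular spread $\mathcal S$ of $\Sigma_\infty$. In $\mathrm{PG}(4,q^2)$ let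 $A_0=(\tau^q,-1,0,0,0)$, $A_1=(0,0,\tau^q,-1,0)$; the transversals of $\mathcal S$ are $g=\langle A_0,A_1\rangle$ and $g^q=\langle A_0^q,A_1^q\rangle$. If $\mathcal O$ has equation $f(x,y,z)=0$ with $f$ a homogeneous quadratic over $\mathbb F_{q^2}$, substituting $x=x_0+x_1\tau$, $y=y_0+y_1\tau$, $z$ and reducing with $\tau^2=t_1\tau+t_0$ gives $f=f_\infty(x_0,x_1,y_0,y_1,z)+\tau f_0(x_0,x_1,y_0,y_1,z)$ with $f_\infty,f_0$ homogeneous quadratics over $\mathbb F_q$; $\mathcal Q_\infty,\mathcal Q_0$ are the quadrics $f_\infty=0$, $f_0=0$ of $\mathrm{PG}(4,q)$. For a quadric $\mathcal Q$ of $\mathrm{PG}(4,q)$, $\mathcal Q^\star$ is the set of points of $\mathrm{PG}(4,q^2)$ satisfying the same equation. *)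

theory Defs
  imports "HOL-Computational_Algebra.Primes"
begin

text \<open>The type 'K is the finite field GF(q^2); GF(q) is its unique subfield
  of order q, i.e. the set of x with x^q = x. Vectors of PG(n-1,q^2) are functions
  nat => 'K vanishing at indices >= n.\<close>

definition prime_power :: "nat \<Rightarrow> bool" where
  "prime_power q \<longleftrightarrow> (\<exists>p k. prime p \<and> k > 0 \<and> q = p ^ k)"

definition Fq :: "nat \<Rightarrow> 'K::field set" where
  "Fq q = {x. x ^ q = x}"

definition primitive_elem :: "'K::field \<Rightarrow> bool" where
  "primitive_elem \<tau> \<longleftrightarrow> (\<forall>x. x \<noteq> 0 \<longrightarrow> (\<exists>n::nat. x = \<tau> ^ n))"

definition coord0 :: "nat \<Rightarrow> 'K::field \<Rightarrow> 'K \<Rightarrow> 'K" where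
  "coord0 q \<tau> c = (THE a. a \<in> Fq q \<and> (\<exists>b \<in> Fq q. c = a + b * \<tau>))"

definition coord1 :: "nat \<Rightarrow> 'K::field \<Rightarrow> 'K \<Rightarrow> 'K" where
  "coord1 q \<tau> c = (THE b. b \<in> Fq q \<and> (\<exists>a \<in> Fq q. c = a + b * \<tau>))"

definition qform :: "nat \<Rightarrow> (nat \<Rightarrow> nat \<Rightarrow> 'K::field) \<Rightarrow> (nat \<Rightarrow> 'K) \<Rightarrow> 'K" where
  "qform n C v = (\<Sum>i<n. \<Sum>j\<in>{i..<n}. C i j * v i * v j)"

text \<open>Non-degenerate (non-singular) conic a x^2 + b y^2 + c z^2 + d xy + e xz + h yz:
  4abc + deh - ah^2 - be^2 - cd^2 \<noteq> 0 (valid in every characteristic).\<close>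
definition nondeg_conic :: "(nat \<Rightarrow> nat \<Rightarrow> 'K::field) \<Rightarrow> bool" where
  "nondeg_conic C \<longleftrightarrow>
     (let a = C 0 0; b = C 1 1; c = C 2 2; d = C 0 1; e = C 0 2; h = C 1 2
      in 4*a*b*c + d*e*h - a*h^2 - b*e^2 - c*d^2 \<noteq> 0)"

text \<open>Substitution matrix: (x,y,z) = (x0 + x1 tau, y0 + y1 tau, z), variables
  (x0,x1,y0,y1,z) have indices 0..4.\<close>
definition bb_mat :: "'K::field \<Rightarrow> nat \<Rightarrow> nat \<Rightarrow> 'K" where
  "bb_mat \<tau> i k =
     (if (i = 0 \<and> k = 0) \<or> (i = 1 \<and> k = 2) \<or> (i = 2 \<and> k = 4) then 1
      else if (i = 0 \<and> k = 1) \<or> (i = 1 \<and> k = 3) then \<tau> else 0)"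

text \<open>Coefficients (over GF(q^2)) of the 5-variable quadratic form f(x0+x1 tau, y0+y1 tau, z).\<close>
definition subst_coeffs :: "'K::field \<Rightarrow> (nat \<Rightarrow> nat \<Rightarrow> 'K) \<Rightarrow> nat \<Rightarrow> nat \<Rightarrow> 'K" where
  "subst_coeffs \<tau> C k l =
     (\<Sum>i<3. \<Sum>j\<in>{i..<3}. C i j *
        (if k = l then bb_mat \<tau> i k * bb_mat \<tau> j k
         else bb_mat \<tau> i k * bb_mat \<tau> j l + bb_mat \<tau> i l * bb_mat \<tau> j k))"

text \<open>f = f_inf + tau f_0 coefficientwise.\<close>
definition f_inf_coeffs :: "nat \<Rightarrow> 'K::field \<Rightarrow> (nat \<Rightarrow> nat \<Rightarrow> 'K) \<Rightarrow> nat \<Rightarrow> nat \<Rightarrow> 'K" where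
  "f_inf_coeffs q \<tau> C k l = coord0 q \<tau> (subst_coeffs \<tau> C k l)"

definition f_0_coeffs :: "nat \<Rightarrow> 'K::field \<Rightarrow> (nat \<Rightarrow> nat \<Rightarrow> 'K) \<Rightarrow> nat \<Rightarrow> nat \<Rightarrow> 'K" where
  "f_0_coeffs q \<tau> C k l = coord1 q \<tau> (subst_coeffs \<tau> C k l)"

text \<open>Equation of Q_t^*: t f_inf + f_0 (t = Some t), or f_inf (t = None, i.e. infinity).\<close>
definition Qt_eval :: "nat \<Rightarrow> 'K::field \<Rightarrow> (nat \<Rightarrow> nat \<Rightarrow> 'K) \<Rightarrow> 'K option \<Rightarrow> (nat \<Rightarrow> 'K) \<Rightarrow> 'K" where
  "Qt_eval q \<tau> C t v =
     (case t of None \<Rightarrow> qform 5 (f_inf_coeffs q \<tau> C) v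
      | Some s \<Rightarrow> s * qform 5 (f_inf_coeffs q \<tau> C) v + qform 5 (f_0_coeffs q \<tau> C) v)"

definition vecs :: "nat \<Rightarrow> (nat \<Rightarrow> 'K::field) set" where
  "vecs n = {v. (\<exists>i. v i \<noteq> 0) \<and> (\<forall>i\<ge>n. v i = 0)}"

definition proj_pt :: "(nat \<Rightarrow> 'K::field) \<Rightarrow> (nat \<Rightarrow> 'K) set" where
  "proj_pt v = {(\<lambda>i. c * v i) | c. c \<noteq> 0}"

text \<open>Points of the conic on l_inf: z = 0.\<close>
definition conic_linf_points :: "(nat \<Rightarrow> nat \<Rightarrow> 'K::field) \<Rightarrow> (nat \<Rightarrow> 'K) set set" where
  "conic_linf_points C = proj_pt ` {w \<in> vecs 3. w 2 = 0 \<and> qform 3 C w = 0}"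

definition A0 :: "nat \<Rightarrow> 'K::field \<Rightarrow> nat \<Rightarrow> 'K" where
  "A0 q \<tau> = (\<lambda>i. if i = 0 then \<tau> ^ q else if i = 1 then -1 else 0)"

definition A1 :: "nat \<Rightarrow> 'K::field \<Rightarrow> nat \<Rightarrow> 'K" where
  "A1 q \<tau> = (\<lambda>i. if i = 2 then \<tau> ^ q else if i = 3 then -1 else 0)"

definition g_vecs :: "nat \<Rightarrow> 'K::field \<Rightarrow> (nat \<Rightarrow> 'K) set" where
  "g_vecs q \<tau> = {v. \<exists>l m. (l, m) \<noteq> (0, 0) \<and> v = (\<lambda>i. l * A0 q \<tau> i + m * A1 q \<tau> i)}"

definition Qt_g_points :: "nat \<Rightarrow> 'K::field \<Rightarrow> (nat \<Rightarrow> nat \<Rightarrow> 'K) \<Rightarrow> 'K option \<Rightarrow> (nat \<Rightarrow> 'K) set set" where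
  "Qt_g_points q \<tau> C t = proj_pt ` {v \<in> g_vecs q \<tau>. Qt_eval q \<tau> C t v = 0}"

end

theory Submission
  imports Defs "HOL-Number_Theory.Residues"
begin

text \<open>Under the Bruck--Bose substitution the point \<open>l A\<^sub>0 + m A\<^sub>1\<close> of the transversal \<open>g\<close>
  becomes \<open>(l(\<tau>\<^sup>q - \<tau>), m(\<tau>\<^sup>q - \<tau>), 0)\<close>, so \<open>f\<^sub>\<infinity> + \<tau> f\<^sub>0 = (\<tau>\<^sup>q - \<tau>)\<^sup>2 F\<close>
  on \<open>g\<close>, where \<open>F = f(l, m, 0)\<close>. Applying the Frobenius map to the coefficients replaces
  \<open>\<tau>\<close> by \<open>\<tau>\<^sup>q\<close>, and the same substitution then gives the zero vector, so
  \<open>f\<^sub>\<infinity> + \<tau>\<^sup>q f\<^sub>0 = 0\<close> on \<open>g\<close>. Solving, \<open>t f\<^sub>\<infinity> + f\<^sub>0 = (\<tau>\<^sup>q - \<tau>)(t \<tau>\<^sup>q - 1) F\<close>,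
  and \<open>t \<tau>\<^sup>q \<noteq> 1\<close> for \<open>t \<in> GF(q)\<close>. Hence \<open>(l, m, 0) \<mapsto> l A\<^sub>0 + m A\<^sub>1\<close> is a bijection
  from the points of the conic on \<open>l\<^sub>\<infinity>\<close> onto the points of \<open>Q\<^sub>t\<^sup>*\<close> on \<open>g\<close>.\<close>

text \<open>The library's \<open>finite_field_power_card_eq_same\<close> needs the class \<open>finite_field\<close>,
  which a type of sort \<open>{field, finite}\<close> does not carry.\<close>

lemma finite_field_power_card_eq:
  fixes x :: "'a::{field,finite}"
  shows "x ^ card (UNIV :: 'a set) = x"
proof (cases "x = 0")
  case True
  then show ?thesis by (simp add: finite_UNIV_card_ge_0)
next
  case False
  define U where "U = UNIV - {0 :: 'a}"
  have bij: "bij_betw ((*) x) U U"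
    by (rule bij_betwI[of _ _ _ "\<lambda>y. y / x"]) (use False in \<open>auto simp: U_def\<close>)
  have "\<Prod>U = (\<Prod>y\<in>U. x * y)"
    using prod.reindex_bij_betw[OF bij, of id] by simp
  also have "\<dots> = x ^ card U * \<Prod>U"
    by (simp add: prod.distrib)
  finally have "x ^ card U = 1"
    by (simp add: U_def)
  moreover have "card (UNIV :: 'a set) = Suc (card U)"
    using finite_UNIV_card_ge_0[where ?'a = 'a] by (simp add: U_def card_Diff_singleton)
  ultimately show ?thesis by simp
qed

lemma prime_power_ge_2:
  assumes "prime_power q"
  shows "2 \<le> q"
proof -
  obtain p k where "prime p" "0 < k" "q = p ^ k"
    using assms unfolding prime_power_def by auto
  then show ?thesis
    using prime_ge_2_nat[of p] self_le_power[of p k] by linarith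
qed

lemma frobenius_add:
  fixes x y :: "'a::{field,finite}"
  assumes "prime_power q" and "card (UNIV :: 'a set) = q ^ n" and "0 < n"
  shows "(x + y) ^ q = x ^ q + y ^ q"
proof -
  obtain p k where p: "prime p" and q: "q = p ^ k" and "0 < k"
    using assms(1) unfolding prime_power_def by auto
  have char_prime: "prime CHAR('a)"
    by (rule prime_CHAR_semidom[OF finite_imp_CHAR_pos]) simp
  have "CHAR('a) dvd p ^ (k * n)"
    using CHAR_dvd_CARD[where 'a = 'a] assms(2) by (simp add: q power_mult)
  then have "CHAR('a) = p"
    using char_prime p prime_dvd_power primes_dvd_imp_eq by blast
  then show ?thesis
    using freshmans_dream'[OF char_prime] q by simp
qed

lemma primitive_elem_card_le:
  fixes \<tau> :: "'a::{field,finite}"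
  assumes "primitive_elem \<tau>" and "0 < n" and "\<tau> ^ Suc n = \<tau>"
  shows "card (UNIV :: 'a set) \<le> Suc n"
proof -
  have "UNIV - {0} \<subseteq> (\<lambda>i. \<tau> ^ i) ` {..<n}"
  proof
    fix x :: 'a
    assume "x \<in> UNIV - {0}"
    then obtain i where x: "x = \<tau> ^ i"
      using assms(1) unfolding primitive_elem_def by auto
    have "\<tau> ^ i = \<tau> ^ (i mod n)"
    proof (cases "\<tau> = 0")
      case True
      then show ?thesis
        using \<open>x \<in> UNIV - {0}\<close> x by (cases i) auto
    next
      case False
      with assms(3) have "\<tau> ^ n = 1" by simp
      have "\<tau> ^ i = \<tau> ^ (n * (i div n) + i mod n)"
        by simp
      also have "\<dots> = (\<tau> ^ n) ^ (i div n) * \<tau> ^ (i mod n)"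
        by (simp only: power_add power_mult)
      finally show ?thesis
        using \<open>\<tau> ^ n = 1\<close> by simp
    qed
    then show "x \<in> (\<lambda>i. \<tau> ^ i) ` {..<n}"
      using x assms(2) by auto
  qed
  then have "card (UNIV - {0::'a}) \<le> card ((\<lambda>i. \<tau> ^ i) ` {..<n})"
    by (intro card_mono) auto
  also have "\<dots> \<le> n"
    using card_image_le[of "{..<n}" "\<lambda>i. \<tau> ^ i"] by simp
  finally show ?thesis
    by (simp add: card_Diff_singleton)
qed

lemma qform_add_scaled:
  "qform n A v + c * qform n B v = qform n (\<lambda>k l. A k l + c * B k l) v"
  unfolding qform_def by (simp add: sum_distrib_left sum.distrib algebra_simps)

lemma qform_subst_coeffs:
  "qform 5 (subst_coeffs \<sigma> C) v = qform 3 C (\<lambda>i. \<Sum>k<5. bb_mat \<sigma> i k * v k)"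
  unfolding qform_def subst_coeffs_def bb_mat_def
  by (simp add: numeral_eq_Suc lessThan_Suc atLeastLessThanSuc algebra_simps)

definition g_vec :: "nat \<Rightarrow> 'K::field \<Rightarrow> 'K \<Rightarrow> 'K \<Rightarrow> nat \<Rightarrow> 'K" where
  "g_vec q \<tau> l m = (\<lambda>i. l * A0 q \<tau> i + m * A1 q \<tau> i)"

definition linf_vec :: "'K::field \<Rightarrow> 'K \<Rightarrow> nat \<Rightarrow> 'K" where
  "linf_vec l m = (\<lambda>i. if i = 0 then l else if i = 1 then m else 0)"

text \<open>Substituting \<open>x = x\<^sub>0 + x\<^sub>1\<sigma>\<close>, \<open>y = y\<^sub>0 + y\<^sub>1\<sigma>\<close> at
  \<open>l A\<^sub>0 + m A\<^sub>1\<close> gives \<open>(l(\<tau>\<^sup>q - \<sigma>), m(\<tau>\<^sup>q - \<sigma>), 0)\<close>.\<close>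

lemma qform_subst_coeffs_g_vec:
  "qform 5 (subst_coeffs \<sigma> C) (g_vec q \<tau> l m) = (\<tau> ^ q - \<sigma>)\<^sup>2 * qform 3 C (linf_vec l m)"
  unfolding qform_subst_coeffs
  unfolding qform_def bb_mat_def A0_def A1_def g_vec_def linf_vec_def
  by (simp add: numeral_eq_Suc lessThan_Suc atLeastLessThanSuc algebra_simps power2_eq_square)

text \<open>An involutive additive power map \<open>x \<mapsto> x\<^sup>q\<close> not fixing \<open>\<tau>\<close>: the Frobenius
  automorphism of \<open>GF(q\<^sup>2)\<close> over \<open>GF(q)\<close>, with \<open>\<tau> \<notin> GF(q)\<close>.\<close>

locale quadratic_frobenius =
  fixes q :: nat and \<tau> :: "'K::field"
  assumes frob_add: "(x + y) ^ q = x ^ q + (y :: 'K) ^ q"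
    and frob_involutive: "(x ^ q) ^ q = (x :: 'K)"
    and tau_conj_ne: "\<tau> ^ q \<noteq> \<tau>"
begin

lemma q_pos: "0 < q"
  using frob_involutive[of 0] by (cases q) auto

lemma frob_diff: "(x - y) ^ q = x ^ q - (y :: 'K) ^ q"
  using frob_add[of "x - y" y] by (simp add: eq_diff_eq)

lemma frob_sum: "(sum f A) ^ q = (\<Sum>i\<in>A. (f i :: 'K) ^ q)"
  by (induction A rule: infinite_finite_induct) (simp_all add: frob_add q_pos power_0_left)

lemma tau_ne_0: "\<tau> \<noteq> 0"
  using tau_conj_ne q_pos by auto

lemma Fq_coords_unique:
  assumes "a \<in> Fq q" "b \<in> Fq q" "a' \<in> Fq q" "b' \<in> Fq q" and "a + b * \<tau> = a' + b' * \<tau>"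
  shows "a = a' \<and> b = b'"
proof (cases "b = b'")
  case True
  with assms(5) show ?thesis by simp
next
  case False
  then have tau: "\<tau> = (a - a') / (b' - b)"
    using assms(5) by (simp add: eq_divide_eq algebra_simps)
  have "\<tau> ^ q = (a ^ q - a' ^ q) / (b' ^ q - b ^ q)"
    unfolding tau power_divide frob_diff ..
  also have "\<dots> = \<tau>"
    using assms(1-4) by (simp add: Fq_def tau)
  finally show ?thesis
    using tau_conj_ne by simp
qed

lemma Fq_coords_exist: "\<exists>a\<in>Fq q. \<exists>b\<in>Fq q. c = a + b * \<tau>"
proof -
  define b where "b = (c - c ^ q) / (\<tau> - \<tau> ^ q)"
  have b_conj: "b ^ q = b"
    unfolding b_def power_divide frob_diff frob_involutive
    by (metis minus_diff_eq minus_divide_divide)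
  have "b * (\<tau> - \<tau> ^ q) = c - c ^ q"
    using tau_conj_ne by (simp add: b_def)
  then have "(c - b * \<tau>) ^ q = c - b * \<tau>"
    by (simp add: frob_diff power_mult_distrib b_conj algebra_simps)
  with b_conj show ?thesis
    by (intro bexI[of _ "c - b * \<tau>"] bexI[of _ b]) (auto simp: Fq_def)
qed

lemma coords_eq:
  assumes "a \<in> Fq q" "b \<in> Fq q"
  shows "coord0 q \<tau> (a + b * \<tau>) = a" and "coord1 q \<tau> (a + b * \<tau>) = b"
proof -
  have uniq: "a' = a \<and> b' = b"
    if "a' \<in> Fq q" "b' \<in> Fq q" "a + b * \<tau> = a' + b' * \<tau>" for a' b'
    using Fq_coords_unique[OF assms that] by simp
  show "coord0 q \<tau> (a + b * \<tau>) = a"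
    unfolding coord0_def by (rule the_equality) (use assms uniq in blast)+
  show "coord1 q \<tau> (a + b * \<tau>) = b"
    unfolding coord1_def by (rule the_equality) (use assms uniq in blast)+
qed

lemma coord_decomposition:
  "coord0 q \<tau> c \<in> Fq q" "coord1 q \<tau> c \<in> Fq q" "c = coord0 q \<tau> c + coord1 q \<tau> c * \<tau>"
proof -
  obtain a b where "a \<in> Fq q" "b \<in> Fq q" and c: "c = a + b * \<tau>"
    using Fq_coords_exist by blast
  then show "coord0 q \<tau> c \<in> Fq q" "coord1 q \<tau> c \<in> Fq q" "c = coord0 q \<tau> c + coord1 q \<tau> c * \<tau>"
    by (simp_all add: coords_eq)
qed

lemma coords_conj: "c ^ q = coord0 q \<tau> c + coord1 q \<tau> c * \<tau> ^ q"
proof -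
  have "c ^ q = (coord0 q \<tau> c + coord1 q \<tau> c * \<tau>) ^ q"
    using coord_decomposition(3) by metis
  then show ?thesis
    using coord_decomposition(1,2) by (simp add: frob_add power_mult_distrib Fq_def)
qed

lemma subst_coeffs_conj:
  "subst_coeffs \<tau> C k l ^ q = subst_coeffs (\<tau> ^ q) (\<lambda>i j. C i j ^ q) k l"
proof -
  have "bb_mat \<tau> i k ^ q = bb_mat (\<tau> ^ q) i k" for i k
    using q_pos unfolding bb_mat_def by simp
  then show ?thesis
    unfolding subst_coeffs_def frob_sum
    by (cases "k = l") (simp_all add: frob_add power_mult_distrib)
qed

lemma qform_f_coeffs_tau:
  "qform n (f_inf_coeffs q \<tau> C) v + \<tau> * qform n (f_0_coeffs q \<tau> C) v = qform n (subst_coeffs \<tau> C) v"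
proof -
  have "coord0 q \<tau> c + \<tau> * coord1 q \<tau> c = c" for c
    using coord_decomposition(3)[of c] by (simp add: mult.commute)
  then show ?thesis
    unfolding qform_add_scaled f_inf_coeffs_def f_0_coeffs_def by simp
qed

lemma qform_f_coeffs_conj:
  "qform n (f_inf_coeffs q \<tau> C) v + \<tau> ^ q * qform n (f_0_coeffs q \<tau> C) v
     = qform n (subst_coeffs (\<tau> ^ q) (\<lambda>i j. C i j ^ q)) v"
proof -
  have "coord0 q \<tau> c + \<tau> ^ q * coord1 q \<tau> c = c ^ q" for c
    using coords_conj[of c] by (simp add: mult.commute)
  then show ?thesis
    unfolding qform_add_scaled f_inf_coeffs_def f_0_coeffs_def by (simp add: subst_coeffs_conj)
qed

lemma f_coeffs_on_g:
  fixes C :: "nat \<Rightarrow> nat \<Rightarrow> 'K" and l m :: 'K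
  defines "F \<equiv> qform 3 C (linf_vec l m)"
  shows "qform 5 (f_0_coeffs q \<tau> C) (g_vec q \<tau> l m) = - (\<tau> ^ q - \<tau>) * F"
    and "qform 5 (f_inf_coeffs q \<tau> C) (g_vec q \<tau> l m) = \<tau> ^ q * (\<tau> ^ q - \<tau>) * F"
proof -
  define P0 where "P0 = qform 5 (f_inf_coeffs q \<tau> C) (g_vec q \<tau> l m)"
  define P1 where "P1 = qform 5 (f_0_coeffs q \<tau> C) (g_vec q \<tau> l m)"
  have tau_eq: "P0 + \<tau> * P1 = (\<tau> ^ q - \<tau>)\<^sup>2 * F"
    unfolding P0_def P1_def F_def qform_f_coeffs_tau qform_subst_coeffs_g_vec ..
  have conj_eq: "P0 + \<tau> ^ q * P1 = 0"
    unfolding P0_def P1_def qform_f_coeffs_conj qform_subst_coeffs_g_vec by simp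
  have "(\<tau> ^ q - \<tau>) * (- P1) = (P0 + \<tau> * P1) - (P0 + \<tau> ^ q * P1)"
    by (simp add: algebra_simps)
  also have "\<dots> = (\<tau> ^ q - \<tau>) * ((\<tau> ^ q - \<tau>) * F)"
    unfolding tau_eq conj_eq by (simp add: power2_eq_square)
  finally have "(\<tau> ^ q - \<tau>) * (- P1) = (\<tau> ^ q - \<tau>) * ((\<tau> ^ q - \<tau>) * F)" .
  then have "- P1 = (\<tau> ^ q - \<tau>) * F"
    by (rule mult_left_cancel[THEN iffD1, rotated]) (use tau_conj_ne in simp)
  then have P1: "P1 = - (\<tau> ^ q - \<tau>) * F"
    by (metis minus_minus mult_minus_left)
  then show "qform 5 (f_0_coeffs q \<tau> C) (g_vec q \<tau> l m) = - (\<tau> ^ q - \<tau>) * F"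
    by (simp add: P1_def)
  show "qform 5 (f_inf_coeffs q \<tau> C) (g_vec q \<tau> l m) = \<tau> ^ q * (\<tau> ^ q - \<tau>) * F"
    using conj_eq P1 unfolding P0_def by (simp add: algebra_simps eq_neg_iff_add_eq_0)
qed

lemma Fq_mult_conj_ne_1:
  assumes "s \<in> Fq q"
  shows "s * \<tau> ^ q \<noteq> 1"
proof
  assume one: "s * \<tau> ^ q = 1"
  then have "(s * \<tau> ^ q) ^ q = 1" by simp
  then have "s * \<tau> = 1"
    using assms by (simp add: power_mult_distrib frob_involutive Fq_def)
  with one have "s \<noteq> 0" and "s * \<tau> ^ q = s * \<tau>"
    by auto
  with tau_conj_ne show False
    by simp
qed

lemma Qt_eval_g_vec_iff:
  assumes "\<forall>s. t = Some s \<longrightarrow> s \<in> Fq q"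
  shows "Qt_eval q \<tau> C t (g_vec q \<tau> l m) = 0 \<longleftrightarrow> qform 3 C (linf_vec l m) = 0"
proof (cases t)
  case None
  then show ?thesis
    using tau_conj_ne tau_ne_0 by (simp add: Qt_eval_def f_coeffs_on_g)
next
  case (Some s)
  have "Qt_eval q \<tau> C t (g_vec q \<tau> l m) = (\<tau> ^ q - \<tau>) * (s * \<tau> ^ q - 1) * qform 3 C (linf_vec l m)"
    using Some by (simp add: Qt_eval_def f_coeffs_on_g algebra_simps)
  moreover have "s * \<tau> ^ q - 1 \<noteq> 0"
    using Fq_mult_conj_ne_1[of s] assms Some by simp
  ultimately show ?thesis
    using tau_conj_ne by simp
qed

end

lemma card_image_eq_if_same_fibres:
  assumes "\<And>x y. x \<in> A \<Longrightarrow> y \<in> A \<Longrightarrow> f x = f y \<longleftrightarrow> g x = g y"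
  shows "card (f ` A) = card (g ` A)"
proof -
  let ?h = "\<lambda>x. (f x, g x)"
  have "inj_on fst (?h ` A)" and "inj_on snd (?h ` A)"
    using assms by (auto intro!: inj_onI)
  then have "card (fst ` ?h ` A) = card (snd ` ?h ` A)"
    by (simp add: card_image)
  then show ?thesis
    by (simp add: image_image)
qed

lemma proj_pt_eq_iff: "proj_pt v = proj_pt w \<longleftrightarrow> (\<exists>c. c \<noteq> 0 \<and> w = (\<lambda>i. c * v i))"
proof
  assume "proj_pt v = proj_pt w"
  moreover have "w \<in> proj_pt w"
    unfolding proj_pt_def by (auto intro!: exI[of _ 1])
  ultimately show "\<exists>c. c \<noteq> 0 \<and> w = (\<lambda>i. c * v i)"
    unfolding proj_pt_def by auto
next
  assume "\<exists>c. c \<noteq> 0 \<and> w = (\<lambda>i. c * v i)"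
  then obtain c where "c \<noteq> 0" and w: "w = (\<lambda>i. c * v i)" by blast
  show "proj_pt v = proj_pt w"
  proof (intro equalityI subsetI)
    fix u
    assume "u \<in> proj_pt v"
    then obtain d where "d \<noteq> 0" and "u = (\<lambda>i. d * v i)"
      unfolding proj_pt_def by blast
    then have "u = (\<lambda>i. (d / c) * w i)"
      using \<open>c \<noteq> 0\<close> by (simp add: w)
    moreover have "d / c \<noteq> 0"
      using \<open>d \<noteq> 0\<close> \<open>c \<noteq> 0\<close> by simp
    ultimately show "u \<in> proj_pt w"
      unfolding proj_pt_def by blast
  next
    fix u
    assume "u \<in> proj_pt w"
    then obtain d where "d \<noteq> 0" and "u = (\<lambda>i. d * w i)"
      unfolding proj_pt_def by blast
    then have "u = (\<lambda>i. (d * c) * v i)"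
      by (simp add: w mult.assoc)
    moreover have "d * c \<noteq> 0"
      using \<open>d \<noteq> 0\<close> \<open>c \<noteq> 0\<close> by simp
    ultimately show "u \<in> proj_pt v"
      unfolding proj_pt_def by blast
  qed
qed

lemma g_vec_scaled_iff:
  "g_vec q \<tau> l' m' = (\<lambda>i. c * g_vec q \<tau> l m i) \<longleftrightarrow> l' = c * l \<and> m' = c * m"
proof
  assume h: "g_vec q \<tau> l' m' = (\<lambda>i. c * g_vec q \<tau> l m i)"
  from fun_cong[OF h, of 1] fun_cong[OF h, of 3] show "l' = c * l \<and> m' = c * m"
    by (simp add: g_vec_def A0_def A1_def)
qed (simp add: g_vec_def A0_def A1_def fun_eq_iff algebra_simps)

lemma linf_vec_scaled_iff:
  "linf_vec l' m' = (\<lambda>i. c * linf_vec l m i) \<longleftrightarrow> l' = c * l \<and> m' = c * m"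
proof
  assume h: "linf_vec l' m' = (\<lambda>i. c * linf_vec l m i)"
  from fun_cong[OF h, of 0] fun_cong[OF h, of 1] show "l' = c * l \<and> m' = c * m"
    by (simp add: linf_vec_def)
qed (simp add: linf_vec_def fun_eq_iff)

lemma proj_pt_g_vec_eq_iff:
  "proj_pt (g_vec q \<tau> l m) = proj_pt (g_vec q \<tau> l' m')
     \<longleftrightarrow> proj_pt (linf_vec l m) = proj_pt (linf_vec l' m')"
  by (simp add: proj_pt_eq_iff g_vec_scaled_iff linf_vec_scaled_iff)

lemma linf_vecs_eq:
  "{w \<in> vecs 3. w 2 = 0 \<and> qform 3 C w = 0}
     = (\<lambda>(l, m). linf_vec l m) ` {(l, m). (l, m) \<noteq> (0, 0) \<and> qform 3 C (linf_vec l m) = 0}"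
proof (intro equalityI subsetI)
  fix w :: "nat \<Rightarrow> 'a"
  assume w: "w \<in> {w \<in> vecs 3. w 2 = 0 \<and> qform 3 C w = 0}"
  have w_pt: "w i = linf_vec (w 0) (w 1) i" for i
    using w unfolding vecs_def linf_vec_def by (cases "i = 0 \<or> i = 1 \<or> i = 2") auto
  then have w_eq: "linf_vec (w 0) (w 1) = w"
    by (intro ext) (rule sym)
  have "(w 0, w 1) \<noteq> (0, 0)"
  proof
    assume "(w 0, w 1) = (0, 0)"
    then have "w i = 0" for i
      using w_pt[of i] by (simp add: linf_vec_def)
    with w show False
      unfolding vecs_def by simp
  qed
  with w w_eq show "w \<in> (\<lambda>(l, m). linf_vec l m) ` {(l, m). (l, m) \<noteq> (0, 0) \<and> qform 3 C (linf_vec l m) = 0}"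
    by (intro image_eqI[of _ _ "(w 0, w 1)"]) simp_all
next
  fix w :: "nat \<Rightarrow> 'a"
  assume "w \<in> (\<lambda>(l, m). linf_vec l m) ` {(l, m). (l, m) \<noteq> (0, 0) \<and> qform 3 C (linf_vec l m) = 0}"
  then obtain l m where lm: "(l, m) \<noteq> (0, 0)" "qform 3 C (linf_vec l m) = 0" and w: "w = linf_vec l m"
    by auto
  have "linf_vec l m 0 \<noteq> 0 \<or> linf_vec l m 1 \<noteq> 0"
    using lm(1) by (simp add: linf_vec_def)
  moreover have "\<forall>i\<ge>3. linf_vec l m i = 0" "linf_vec l m 2 = 0"
    by (simp_all add: linf_vec_def)
  ultimately show "w \<in> {w \<in> vecs 3. w 2 = 0 \<and> qform 3 C w = 0}"
    unfolding w vecs_def using lm(2) by blast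
qed

lemma conic_linf_points_eq:
  "conic_linf_points C
     = (\<lambda>(l, m). proj_pt (linf_vec l m)) ` {(l, m). (l, m) \<noteq> (0, 0) \<and> qform 3 C (linf_vec l m) = 0}"
  unfolding conic_linf_points_def linf_vecs_eq image_image by (simp add: case_prod_unfold)

lemma Qt_g_points_eq:
  "Qt_g_points q \<tau> C t
     = (\<lambda>(l, m). proj_pt (g_vec q \<tau> l m)) `
         {(l, m). (l, m) \<noteq> (0, 0) \<and> Qt_eval q \<tau> C t (g_vec q \<tau> l m) = 0}"
proof -
  have "{v \<in> g_vecs q \<tau>. Qt_eval q \<tau> C t v = 0}
      = (\<lambda>(l, m). g_vec q \<tau> l m) ` {(l, m). (l, m) \<noteq> (0, 0) \<and> Qt_eval q \<tau> C t (g_vec q \<tau> l m) = 0}"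
    unfolding g_vecs_def g_vec_def by auto
  then show ?thesis
    unfolding Qt_g_points_def by (simp add: image_image case_prod_unfold)
qed

theorem theorem4p1:
  fixes q :: nat and \<tau> t0 t1 :: "'K::{field,finite}"
    and C :: "nat \<Rightarrow> nat \<Rightarrow> 'K" and t :: "'K option"
  assumes "prime_power q"
    and "card (UNIV :: 'K set) = q ^ 2"
    and "primitive_elem \<tau>"
    and "t0 \<in> Fq q" and "t1 \<in> Fq q" and "\<tau> ^ 2 = t1 * \<tau> + t0"
    and "nondeg_conic C"
    and "\<forall>s. t = Some s \<longrightarrow> s \<in> Fq q"
  shows "(card (conic_linf_points C) = 0 \<longleftrightarrow> card (Qt_g_points q \<tau> C t) = 0)
       \<and> (card (conic_linf_points C) = 1 \<longleftrightarrow> card (Qt_g_points q \<tau> C t) = 1)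
       \<and> (card (conic_linf_points C) = 2 \<longleftrightarrow> card (Qt_g_points q \<tau> C t) = 2)"
proof -
  have "2 \<le> q"
    using assms(1) by (rule prime_power_ge_2)
  have "\<tau> ^ q \<noteq> \<tau>"
  proof
    assume "\<tau> ^ q = \<tau>"
    then have "q ^ 2 \<le> q"
      using primitive_elem_card_le[OF assms(3), of "q - 1"] assms(2) \<open>2 \<le> q\<close> by simp
    with \<open>2 \<le> q\<close> show False
      by (simp add: power2_eq_square)
  qed
  moreover have "(x ^ q) ^ q = x" for x :: 'K
    using finite_field_power_card_eq[of x] assms(2) by (simp add: power2_eq_square power_mult)
  ultimately interpret quadratic_frobenius q \<tau>
    using frobenius_add[OF assms(1,2)] by unfold_locales auto
  have "card (Qt_g_points q \<tau> C t) = card (conic_linf_points C)"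
    unfolding Qt_g_points_eq conic_linf_points_eq Qt_eval_g_vec_iff[OF assms(8)]
    by (rule card_image_eq_if_same_fibres) (clarsimp simp: proj_pt_g_vec_eq_iff)
  then show ?thesis by simp
qed

end
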